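(* Let $\mathcal{C}$ and $\mathcal{D}$ be cartesian left-additive categories and $F:\mathcal{C}\to\mathcal{D}$ a cartesian left-additive functor. Then there is a cartesian left-additive functor $\mathbf{Lens}_A(F):\mathbf{Lens}_A(\mathcal{C})\to\mathbf{Lens}_A(\mathcal{D})$ which sends an object $(A,A')$ to $(F(A),F(A'))$ and a morphism $(f,f^* ):(A,A')\to(B,B')$ to $(F(f),\overline{f^*})$, where $\overline{f^*}$ is the composite $F(A)\times F(B')\cong F(A\times B')\xrightarrow{F(f^* )}F(A')$.
   Context: Composition is written diagrammatically. A cartesian left-additive category is a category with chosen finite products in which each hom-set is a commutative monoid (addition $+$, zero $0$) with $f;(g+h)=f;g+f;h$, $f;0=0$, and all projections are additive (a map $h$ is additive if $(x+y);h=x;h+y;h$ and $0;h=0$). A cartesian left-additive functor is a functor preserving finite products and the commutative monoid structure ($F(f+g)=F(f)+F(g)$, $F(0)=0$). A morphism $f:X\times A\to B$ is additive in the second variable if $\langle x,a_1+a_2\rangle;f=\langle x,a_1\rangle;f+\langle x,a_2\rangle;f$ and $\langle x,0\rangle;f=0$ for all $x:Z\to X$, $a_1,a_2:Z\to A$. $\mathbf{Lens}(\mathcal{C})$ has objects pairs $(A,A')$; morphisms $(A,A')\to(B,B')$ are pairs $(f,f^* )$ with $f:A\to B$, $f^*:A\times B'\to A'$; identity $(1_A,\pi_1)$; composite of $(f,f^* )$ and $(g,g^* )$ is $(f;g,\langle\pi_0,\langle\pi_0;f,\pi_1\rangle;g^*\rangle;f^* )$. $\mathbf{Lens}_A(\mathcal{C})$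 is the wide subcategory of lenses $(f,f^* )$ with $f^*$ additive in the second variable; it is cartesian left-additive, with the monoid on $(A,A')$ given by unit $(0_A,!):(1,1)\to(A,A')$ and multiplication $(+_A,\pi_2;\Delta_{A'}):(A\times A,A'\times A')\to(A,A')$. *)

theory Defs
  imports Main
begin

text \<open>Composition is diagrammatic: c_comp C f g is f;g (first f, then g).\<close>

record ('o, 'a) clac =
  c_obj  :: "'o set"
  c_arr  :: "'a set"
  c_dom  :: "'a \<Rightarrow> 'o"
  c_cod  :: "'a \<Rightarrow> 'o"
  c_id   :: "'o \<Rightarrow> 'a"
  c_comp :: "'a \<Rightarrow> 'a \<Rightarrow> 'a"
  c_term :: "'o"
  c_bang :: "'o \<Rightarrow> 'a"
  c_prod :: "'o \<Rightarrow> 'o \<Rightarrow> 'o"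
  c_pi0  :: "'o \<Rightarrow> 'o \<Rightarrow> 'a"
  c_pi1  :: "'o \<Rightarrow> 'o \<Rightarrow> 'a"
  c_pair :: "'a \<Rightarrow> 'a \<Rightarrow> 'a"
  c_add  :: "'a \<Rightarrow> 'a \<Rightarrow> 'a"
  c_zero :: "'o \<Rightarrow> 'o \<Rightarrow> 'a"

definition hom :: "('o, 'a) clac \<Rightarrow> 'o \<Rightarrow> 'o \<Rightarrow> 'a set" where
  "hom C A B = {f \<in> c_arr C. c_dom C f = A \<and> c_cod C f = B}"

definition is_category :: "('o, 'a) clac \<Rightarrow> bool" where
  "is_category C \<longleftrightarrow>
     (\<forall>f \<in> c_arr C. c_dom C f \<in> c_obj C \<and> c_cod C f \<in> c_obj C) \<and>
     (\<forall>A \<in> c_obj C. c_id C A \<in> hom C A A) \<and>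
     (\<forall>A B D f g. f \<in> hom C A B \<longrightarrow> g \<in> hom C B D \<longrightarrow> c_comp C f g \<in> hom C A D) \<and>
     (\<forall>A B f. f \<in> hom C A B \<longrightarrow> c_comp C (c_id C A) f = f \<and> c_comp C f (c_id C B) = f) \<and>
     (\<forall>A B D E f g h. f \<in> hom C A B \<longrightarrow> g \<in> hom C B D \<longrightarrow> h \<in> hom C D E \<longrightarrow>
        c_comp C (c_comp C f g) h = c_comp C f (c_comp C g h))"

definition is_cartesian :: "('o, 'a) clac \<Rightarrow> bool" where
  "is_cartesian C \<longleftrightarrow>
     c_term C \<in> c_obj C \<and>
     (\<forall>A \<in> c_obj C. c_bang C A \<in> hom C A (c_term C)) \<and>
     (\<forall>A f. f \<in> hom C A (c_term C) \<longrightarrow> f = c_bang C A) \<and>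
     (\<forall>A \<in> c_obj C. \<forall>B \<in> c_obj C.
        c_prod C A B \<in> c_obj C \<and>
        c_pi0 C A B \<in> hom C (c_prod C A B) A \<and>
        c_pi1 C A B \<in> hom C (c_prod C A B) B) \<and>
     (\<forall>Z A B f g. A \<in> c_obj C \<longrightarrow> B \<in> c_obj C \<longrightarrow> f \<in> hom C Z A \<longrightarrow> g \<in> hom C Z B \<longrightarrow>
        c_pair C f g \<in> hom C Z (c_prod C A B) \<and>
        c_comp C (c_pair C f g) (c_pi0 C A B) = f \<and>
        c_comp C (c_pair C f g) (c_pi1 C A B) = g) \<and>
     (\<forall>Z A B h. A \<in> c_obj C \<longrightarrow> B \<in> c_obj C \<longrightarrow> h \<in> hom C Z (c_prod C A B) \<longrightarrow>
        c_pair C (c_comp C h (c_pi0 C A B)) (c_comp C h (c_pi1 C A B)) = h)"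

definition is_additive :: "('o, 'a) clac \<Rightarrow> 'o \<Rightarrow> 'o \<Rightarrow> 'a \<Rightarrow> bool" where
  "is_additive C X Y h \<longleftrightarrow>
     (\<forall>Z x y. x \<in> hom C Z X \<longrightarrow> y \<in> hom C Z X \<longrightarrow>
        c_comp C (c_add C x y) h = c_add C (c_comp C x h) (c_comp C y h)) \<and>
     (\<forall>Z \<in> c_obj C. c_comp C (c_zero C Z X) h = c_zero C Z Y)"

definition is_left_additive :: "('o, 'a) clac \<Rightarrow> bool" where
  "is_left_additive C \<longleftrightarrow>
     (\<forall>A B f g. f \<in> hom C A B \<longrightarrow> g \<in> hom C A B \<longrightarrow> c_add C f g \<in> hom C A B) \<and>
     (\<forall>A \<in> c_obj C. \<forall>B \<in> c_obj C. c_zero C A B \<in> hom C A B) \<and>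
     (\<forall>A B f g h. f \<in> hom C A B \<longrightarrow> g \<in> hom C A B \<longrightarrow> h \<in> hom C A B \<longrightarrow>
        c_add C (c_add C f g) h = c_add C f (c_add C g h)) \<and>
     (\<forall>A B f g. f \<in> hom C A B \<longrightarrow> g \<in> hom C A B \<longrightarrow> c_add C f g = c_add C g f) \<and>
     (\<forall>A B f. f \<in> hom C A B \<longrightarrow> c_add C f (c_zero C A B) = f) \<and>
     (\<forall>A B D f g h. f \<in> hom C A B \<longrightarrow> g \<in> hom C B D \<longrightarrow> h \<in> hom C B D \<longrightarrow>
        c_comp C f (c_add C g h) = c_add C (c_comp C f g) (c_comp C f h)) \<and>
     (\<forall>A B D f. f \<in> hom C A B \<longrightarrow> D \<in> c_obj C \<longrightarrow>
        c_comp C f (c_zero C B D) = c_zero C A D) \<and>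
     (\<forall>A \<in> c_obj C. \<forall>B \<in> c_obj C.
        is_additive C (c_prod C A B) A (c_pi0 C A B) \<and>
        is_additive C (c_prod C A B) B (c_pi1 C A B))"

definition clac :: "('o, 'a) clac \<Rightarrow> bool" where
  "clac C \<longleftrightarrow> is_category C \<and> is_cartesian C \<and> is_left_additive C"

definition is_iso :: "('o, 'a) clac \<Rightarrow> 'a \<Rightarrow> bool" where
  "is_iso C f \<longleftrightarrow> f \<in> c_arr C \<and>
     (\<exists>g \<in> hom C (c_cod C f) (c_dom C f).
        c_comp C f g = c_id C (c_dom C f) \<and> c_comp C g f = c_id C (c_cod C f))"

definition iso_inv :: "('o, 'a) clac \<Rightarrow> 'a \<Rightarrow> 'a" where
  "iso_inv C f = (SOME g. g \<in> hom C (c_cod C f) (c_dom C f) \<and>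
        c_comp C f g = c_id C (c_dom C f) \<and> c_comp C g f = c_id C (c_cod C f))"

definition is_functor ::
  "('o, 'a) clac \<Rightarrow> ('p, 'b) clac \<Rightarrow> ('o \<Rightarrow> 'p) \<Rightarrow> ('a \<Rightarrow> 'b) \<Rightarrow> bool" where
  "is_functor C D Fo Fa \<longleftrightarrow>
     (\<forall>A \<in> c_obj C. Fo A \<in> c_obj D) \<and>
     (\<forall>A B f. f \<in> hom C A B \<longrightarrow> Fa f \<in> hom D (Fo A) (Fo B)) \<and>
     (\<forall>A \<in> c_obj C. Fa (c_id C A) = c_id D (Fo A)) \<and>
     (\<forall>A B E f g. f \<in> hom C A B \<longrightarrow> g \<in> hom C B E \<longrightarrow>
        Fa (c_comp C f g) = c_comp D (Fa f) (Fa g))"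

definition preserves_products ::
  "('o, 'a) clac \<Rightarrow> ('p, 'b) clac \<Rightarrow> ('o \<Rightarrow> 'p) \<Rightarrow> ('a \<Rightarrow> 'b) \<Rightarrow> bool" where
  "preserves_products C D Fo Fa \<longleftrightarrow>
     is_iso D (c_bang D (Fo (c_term C))) \<and>
     (\<forall>A \<in> c_obj C. \<forall>B \<in> c_obj C.
        is_iso D (c_pair D (Fa (c_pi0 C A B)) (Fa (c_pi1 C A B))))"

definition preserves_additive ::
  "('o, 'a) clac \<Rightarrow> ('p, 'b) clac \<Rightarrow> ('o \<Rightarrow> 'p) \<Rightarrow> ('a \<Rightarrow> 'b) \<Rightarrow> bool" where
  "preserves_additive C D Fo Fa \<longleftrightarrow>
     (\<forall>A B f g. f \<in> hom C A B \<longrightarrow> g \<in> hom C A B \<longrightarrow>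
        Fa (c_add C f g) = c_add D (Fa f) (Fa g)) \<and>
     (\<forall>A \<in> c_obj C. \<forall>B \<in> c_obj C. Fa (c_zero C A B) = c_zero D (Fo A) (Fo B))"

definition clac_functor ::
  "('o, 'a) clac \<Rightarrow> ('p, 'b) clac \<Rightarrow> ('o \<Rightarrow> 'p) \<Rightarrow> ('a \<Rightarrow> 'b) \<Rightarrow> bool" where
  "clac_functor C D Fo Fa \<longleftrightarrow>
     is_functor C D Fo Fa \<and> preserves_products C D Fo Fa \<and> preserves_additive C D Fo Fa"

definition additive_2nd :: "('o, 'a) clac \<Rightarrow> 'o \<Rightarrow> 'o \<Rightarrow> 'o \<Rightarrow> 'a \<Rightarrow> bool" where
  "additive_2nd C X A B f \<longleftrightarrow>
     (\<forall>Z x a1 a2. x \<in> hom C Z X \<longrightarrow> a1 \<in> hom C Z A \<longrightarrow> a2 \<in> hom C Z A \<longrightarrow>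
        c_comp C (c_pair C x (c_add C a1 a2)) f =
        c_add C (c_comp C (c_pair C x a1) f) (c_comp C (c_pair C x a2) f)) \<and>
     (\<forall>Z x. x \<in> hom C Z X \<longrightarrow>
        c_comp C (c_pair C x (c_zero C Z A)) f = c_zero C Z B)"

text \<open>A lens (f, f*) : (A,A') \<rightarrow> (B,B') is represented as the tuple
  ((A,A'), (B,B'), f, f*), carrying its domain and codomain.\<close>

type_synonym ('o, 'a) lens = "('o \<times> 'o) \<times> ('o \<times> 'o) \<times> 'a \<times> 'a"

definition lens_arr :: "('o, 'a) clac \<Rightarrow> ('o, 'a) lens set" where
  "lens_arr C = {((A, A'), (B, B'), f, fs).
      A \<in> c_obj C \<and> A' \<in> c_obj C \<and> B \<in> c_obj C \<and> B' \<in> c_obj C \<and>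
      f \<in> hom C A B \<and> fs \<in> hom C (c_prod C A B') A' \<and>
      additive_2nd C A B' A' fs}"

fun lens_comp :: "('o, 'a) clac \<Rightarrow> ('o, 'a) lens \<Rightarrow> ('o, 'a) lens \<Rightarrow> ('o, 'a) lens" where
  "lens_comp C ((A, A'), (B, B'), f, fs) (_, (E, E'), g, gs) =
     ((A, A'), (E, E'), c_comp C f g,
      c_comp C
        (c_pair C (c_pi0 C A E')
           (c_comp C (c_pair C (c_comp C (c_pi0 C A E') f) (c_pi1 C A E')) gs))
        fs)"

fun lens_id :: "('o, 'a) clac \<Rightarrow> 'o \<times> 'o \<Rightarrow> ('o, 'a) lens" where
  "lens_id C (A, A') = ((A, A'), (A, A'), c_id C A, c_pi1 C A A')"

fun lens_bang :: "('o, 'a) clac \<Rightarrow> 'o \<times> 'o \<Rightarrow> ('o, 'a) lens" where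
  "lens_bang C (A, A') = ((A, A'), (c_term C, c_term C), c_bang C A,
       c_zero C (c_prod C A (c_term C)) A')"

fun lens_prod :: "('o, 'a) clac \<Rightarrow> 'o \<times> 'o \<Rightarrow> 'o \<times> 'o \<Rightarrow> 'o \<times> 'o" where
  "lens_prod C (A, A') (B, B') = (c_prod C A B, c_prod C A' B')"

fun lens_pi0 :: "('o, 'a) clac \<Rightarrow> 'o \<times> 'o \<Rightarrow> 'o \<times> 'o \<Rightarrow> ('o, 'a) lens" where
  "lens_pi0 C (A, A') (B, B') =
     ((c_prod C A B, c_prod C A' B'), (A, A'), c_pi0 C A B,
      c_pair C (c_pi1 C (c_prod C A B) A') (c_zero C (c_prod C (c_prod C A B) A') B'))"

fun lens_pi1 :: "('o, 'a) clac \<Rightarrow> 'o \<times> 'o \<Rightarrow> 'o \<times> 'o \<Rightarrow> ('o, 'a) lens" where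
  "lens_pi1 C (A, A') (B, B') =
     ((c_prod C A B, c_prod C A' B'), (B, B'), c_pi1 C A B,
      c_pair C (c_zero C (c_prod C (c_prod C A B) B') A') (c_pi1 C (c_prod C A B) B'))"

fun lens_pair :: "('o, 'a) clac \<Rightarrow> ('o, 'a) lens \<Rightarrow> ('o, 'a) lens \<Rightarrow> ('o, 'a) lens" where
  "lens_pair C ((Z, Z'), (A, A'), f, fs) (_, (B, B'), g, gs) =
     ((Z, Z'), (c_prod C A B, c_prod C A' B'), c_pair C f g,
      c_add C
        (c_comp C (c_pair C (c_pi0 C Z (c_prod C A' B'))
                     (c_comp C (c_pi1 C Z (c_prod C A' B')) (c_pi0 C A' B'))) fs)
        (c_comp C (c_pair C (c_pi0 C Z (c_prod C A' B'))
                     (c_comp C (c_pi1 C Z (c_prod C A' B')) (c_pi1 C A' B'))) gs))"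

text \<open>Hom-set monoid: pointwise (f,f*) + (g,g*) = (f+g, f*+g*), zero (0,0).
  This induces exactly the object monoids (0_A,!) and (+_A, \<pi>2;\<Delta>).\<close>

fun lens_add :: "('o, 'a) clac \<Rightarrow> ('o, 'a) lens \<Rightarrow> ('o, 'a) lens \<Rightarrow> ('o, 'a) lens" where
  "lens_add C (a, b, f, fs) (_, _, g, gs) = (a, b, c_add C f g, c_add C fs gs)"

fun lens_zero :: "('o, 'a) clac \<Rightarrow> 'o \<times> 'o \<Rightarrow> 'o \<times> 'o \<Rightarrow> ('o, 'a) lens" where
  "lens_zero C (A, A') (B, B') =
     ((A, A'), (B, B'), c_zero C A B, c_zero C (c_prod C A B') A')"

definition LensA :: "('o, 'a) clac \<Rightarrow> ('o \<times> 'o, ('o, 'a) lens) clac" where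
  "LensA C = \<lparr>
     c_obj = c_obj C \<times> c_obj C,
     c_arr = lens_arr C,
     c_dom = (\<lambda>(a, b, f, fs). a),
     c_cod = (\<lambda>(a, b, f, fs). b),
     c_id = lens_id C,
     c_comp = lens_comp C,
     c_term = (c_term C, c_term C),
     c_bang = lens_bang C,
     c_prod = lens_prod C,
     c_pi0 = lens_pi0 C,
     c_pi1 = lens_pi1 C,
     c_pair = lens_pair C,
     c_add = lens_add C,
     c_zero = lens_zero C \<rparr>"

fun LensA_obj :: "('o \<Rightarrow> 'p) \<Rightarrow> 'o \<times> 'o \<Rightarrow> 'p \<times> 'p" where
  "LensA_obj Fo (A, A') = (Fo A, Fo A')"

fun LensA_arr :: "('o, 'a) clac \<Rightarrow> ('p, 'b) clac \<Rightarrow> ('o \<Rightarrow> 'p) \<Rightarrow> ('a \<Rightarrow> 'b)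
    \<Rightarrow> ('o, 'a) lens \<Rightarrow> ('p, 'b) lens" where
  "LensA_arr C D Fo Fa ((A, A'), (B, B'), f, fs) =
     ((Fo A, Fo A'), (Fo B, Fo B'), Fa f,
      c_comp D (iso_inv D (c_pair D (Fa (c_pi0 C A B')) (Fa (c_pi1 C A B')))) (Fa fs))"

end

theory Submission
  imports Defs
begin

(*
  The comparison maps \<phi> = <F \<pi>0, F \<pi>1> : F(A \<times> B) \<rightarrow> F A \<times> F B and F 1 \<rightarrow> 1 of F are
  invertible, so maps into F A \<times> F B can be pulled back to maps into F(A \<times> B), and zero maps
  into F X factor through F 1.  This makes F preserve additive maps, keeps the backward part
  \<phi>\<inverse>;F f\<^sup>* of each image lens additive in its second variable, and turns the lens
  composition formula of D into the image under F of the one of C.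

  For products, a lens (f, \<pi>1;g') whose forward part f is invertible and whose backward part
  is a projection followed by the inverse g' of an additive isomorphism f' is invertible, with
  inverse (f\<inverse>, \<pi>1;f').  The comparison lenses of Lens_A(F) have exactly this form: for the
  terminal object with f = f' = !, for binary products with f = \<phi>_{A,B} and f' = \<phi>_{A',B'}.
*)

section \<open>Cartesian left-additive categories\<close>

locale cartesian_left_additive =
  fixes C :: "('o, 'a) clac"
  assumes clac: "clac C"
begin

lemma category: "is_category C"
  and cartesian: "is_cartesian C"
  and left_additive: "is_left_additive C"
  using clac unfolding clac_def by auto

lemma dom_in_obj [simp]: "f \<in> c_arr C \<Longrightarrow> c_dom C f \<in> c_obj C"
  and cod_in_obj [simp]: "f \<in> c_arr C \<Longrightarrow> c_cod C f \<in> c_obj C"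
  using category unfolding is_category_def by auto

lemma id_in_arr [simp]: "A \<in> c_obj C \<Longrightarrow> c_id C A \<in> c_arr C"
  and dom_id [simp]: "A \<in> c_obj C \<Longrightarrow> c_dom C (c_id C A) = A"
  and cod_id [simp]: "A \<in> c_obj C \<Longrightarrow> c_cod C (c_id C A) = A"
  using category unfolding is_category_def hom_def by auto

lemma comp_in_hom: "f \<in> hom C A B \<Longrightarrow> g \<in> hom C B E \<Longrightarrow> c_comp C f g \<in> hom C A E"
  using category unfolding is_category_def by blast

lemma comp_in_arr [simp]:
    "f \<in> c_arr C \<Longrightarrow> g \<in> c_arr C \<Longrightarrow> c_cod C f = c_dom C g \<Longrightarrow> c_comp C f g \<in> c_arr C"
  and dom_comp [simp]:
    "f \<in> c_arr C \<Longrightarrow> g \<in> c_arr C \<Longrightarrow> c_cod C f = c_dom C g \<Longrightarrow> c_dom C (c_comp C f g) = c_dom C f"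
  and cod_comp [simp]:
    "f \<in> c_arr C \<Longrightarrow> g \<in> c_arr C \<Longrightarrow> c_cod C f = c_dom C g \<Longrightarrow> c_cod C (c_comp C f g) = c_cod C g"
  using comp_in_hom[of f "c_dom C f" "c_cod C f" g "c_cod C g"] by (auto simp: hom_def)

lemma comp_id_left [simp]: "f \<in> c_arr C \<Longrightarrow> c_dom C f = A \<Longrightarrow> c_comp C (c_id C A) f = f"
  and comp_id_right [simp]: "f \<in> c_arr C \<Longrightarrow> c_cod C f = A \<Longrightarrow> c_comp C f (c_id C A) = f"
  using category unfolding is_category_def hom_def by auto

lemma comp_assoc [simp]:
  assumes "f \<in> c_arr C" "g \<in> c_arr C" "h \<in> c_arr C" "c_cod C f = c_dom C g" "c_cod C g = c_dom C h"
  shows "c_comp C (c_comp C f g) h = c_comp C f (c_comp C g h)"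
  using category assms unfolding is_category_def hom_def by blast

lemma term_in_obj [simp]: "c_term C \<in> c_obj C"
  using cartesian unfolding is_cartesian_def by auto

lemma bang_in_arr [simp]: "A \<in> c_obj C \<Longrightarrow> c_bang C A \<in> c_arr C"
  and dom_bang [simp]: "A \<in> c_obj C \<Longrightarrow> c_dom C (c_bang C A) = A"
  and cod_bang [simp]: "A \<in> c_obj C \<Longrightarrow> c_cod C (c_bang C A) = c_term C"
  using cartesian unfolding is_cartesian_def hom_def by auto

lemma bang_unique: "f \<in> c_arr C \<Longrightarrow> c_cod C f = c_term C \<Longrightarrow> f = c_bang C (c_dom C f)"
  using cartesian unfolding is_cartesian_def hom_def by auto

lemma into_term_unique:
  "f \<in> c_arr C \<Longrightarrow> g \<in> c_arr C \<Longrightarrow> c_cod C f = c_term C \<Longrightarrow> c_cod C g = c_term C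
    \<Longrightarrow> c_dom C f = c_dom C g \<Longrightarrow> f = g"
  using bang_unique by metis

lemma prod_in_obj [simp]: "A \<in> c_obj C \<Longrightarrow> B \<in> c_obj C \<Longrightarrow> c_prod C A B \<in> c_obj C"
  and pi0_in_arr [simp]: "A \<in> c_obj C \<Longrightarrow> B \<in> c_obj C \<Longrightarrow> c_pi0 C A B \<in> c_arr C"
  and dom_pi0 [simp]: "A \<in> c_obj C \<Longrightarrow> B \<in> c_obj C \<Longrightarrow> c_dom C (c_pi0 C A B) = c_prod C A B"
  and cod_pi0 [simp]: "A \<in> c_obj C \<Longrightarrow> B \<in> c_obj C \<Longrightarrow> c_cod C (c_pi0 C A B) = A"
  and pi1_in_arr [simp]: "A \<in> c_obj C \<Longrightarrow> B \<in> c_obj C \<Longrightarrow> c_pi1 C A B \<in> c_arr C"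
  and dom_pi1 [simp]: "A \<in> c_obj C \<Longrightarrow> B \<in> c_obj C \<Longrightarrow> c_dom C (c_pi1 C A B) = c_prod C A B"
  and cod_pi1 [simp]: "A \<in> c_obj C \<Longrightarrow> B \<in> c_obj C \<Longrightarrow> c_cod C (c_pi1 C A B) = B"
  using cartesian unfolding is_cartesian_def hom_def by auto

lemma pair_universal:
  assumes "f \<in> c_arr C" "g \<in> c_arr C" "c_dom C f = c_dom C g"
  shows "c_pair C f g \<in> hom C (c_dom C f) (c_prod C (c_cod C f) (c_cod C g)) \<and>
    c_comp C (c_pair C f g) (c_pi0 C (c_cod C f) (c_cod C g)) = f \<and>
    c_comp C (c_pair C f g) (c_pi1 C (c_cod C f) (c_cod C g)) = g"
proof -
  have "f \<in> hom C (c_dom C f) (c_cod C f)" "g \<in> hom C (c_dom C f) (c_cod C g)"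
    using assms by (simp_all add: hom_def)
  moreover have "c_cod C f \<in> c_obj C" "c_cod C g \<in> c_obj C"
    using assms by simp_all
  ultimately show ?thesis
    using cartesian unfolding is_cartesian_def by blast
qed

lemma pair_in_arr [simp]:
    "f \<in> c_arr C \<Longrightarrow> g \<in> c_arr C \<Longrightarrow> c_dom C f = c_dom C g \<Longrightarrow> c_pair C f g \<in> c_arr C"
  and dom_pair [simp]:
    "f \<in> c_arr C \<Longrightarrow> g \<in> c_arr C \<Longrightarrow> c_dom C f = c_dom C g \<Longrightarrow> c_dom C (c_pair C f g) = c_dom C f"
  and cod_pair [simp]:
    "f \<in> c_arr C \<Longrightarrow> g \<in> c_arr C \<Longrightarrow> c_dom C f = c_dom C g \<Longrightarrow>
      c_cod C (c_pair C f g) = c_prod C (c_cod C f) (c_cod C g)"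
  using pair_universal[of f g] by (auto simp: hom_def)

lemma pair_pi0 [simp]:
    "f \<in> c_arr C \<Longrightarrow> g \<in> c_arr C \<Longrightarrow> c_dom C f = c_dom C g \<Longrightarrow> c_cod C f = A \<Longrightarrow> c_cod C g = B
      \<Longrightarrow> c_comp C (c_pair C f g) (c_pi0 C A B) = f"
  and pair_pi1 [simp]:
    "f \<in> c_arr C \<Longrightarrow> g \<in> c_arr C \<Longrightarrow> c_dom C f = c_dom C g \<Longrightarrow> c_cod C f = A \<Longrightarrow> c_cod C g = B
      \<Longrightarrow> c_comp C (c_pair C f g) (c_pi1 C A B) = g"
  using pair_universal[of f g] by auto

lemma pair_pi1_comp [simp]:
    "f \<in> c_arr C \<Longrightarrow> g \<in> c_arr C \<Longrightarrow> c_dom C f = c_dom C g \<Longrightarrow> c_cod C f = A \<Longrightarrow> c_cod C g = B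
      \<Longrightarrow> h \<in> c_arr C \<Longrightarrow> c_dom C h = B
      \<Longrightarrow> c_comp C (c_pair C f g) (c_comp C (c_pi1 C A B) h) = c_comp C g h"
  by (subst comp_assoc[symmetric]) auto

lemma pair_eta:
  "h \<in> c_arr C \<Longrightarrow> c_cod C h = c_prod C A B \<Longrightarrow> A \<in> c_obj C \<Longrightarrow> B \<in> c_obj C \<Longrightarrow>
    c_pair C (c_comp C h (c_pi0 C A B)) (c_comp C h (c_pi1 C A B)) = h"
  using cartesian unfolding is_cartesian_def hom_def by auto

lemma pair_unique:
  "h \<in> c_arr C \<Longrightarrow> c_cod C h = c_prod C A B \<Longrightarrow> A \<in> c_obj C \<Longrightarrow> B \<in> c_obj C \<Longrightarrow>
    c_comp C h (c_pi0 C A B) = f \<Longrightarrow> c_comp C h (c_pi1 C A B) = g \<Longrightarrow> h = c_pair C f g"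
  using pair_eta by metis

lemma comp_pair [simp]:
  "h \<in> c_arr C \<Longrightarrow> f \<in> c_arr C \<Longrightarrow> g \<in> c_arr C \<Longrightarrow> c_cod C h = c_dom C f \<Longrightarrow> c_dom C f = c_dom C g
    \<Longrightarrow> c_comp C h (c_pair C f g) = c_pair C (c_comp C h f) (c_comp C h g)"
  by (rule pair_unique[of _ "c_cod C f" "c_cod C g"]; simp)

lemma comp_pair_comp [simp]:
  "h \<in> c_arr C \<Longrightarrow> f \<in> c_arr C \<Longrightarrow> g \<in> c_arr C \<Longrightarrow> c_cod C h = c_dom C f \<Longrightarrow> c_dom C f = c_dom C g
    \<Longrightarrow> k \<in> c_arr C \<Longrightarrow> c_dom C k = c_prod C (c_cod C f) (c_cod C g)
    \<Longrightarrow> c_comp C h (c_comp C (c_pair C f g) k) = c_comp C (c_pair C (c_comp C h f) (c_comp C h g)) k"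
  by (subst comp_assoc[symmetric]) auto

lemma add_in_hom: "f \<in> hom C A B \<Longrightarrow> g \<in> hom C A B \<Longrightarrow> c_add C f g \<in> hom C A B"
  using left_additive unfolding is_left_additive_def by (elim conjE) blast

lemma add_in_arr [simp]:
    "f \<in> c_arr C \<Longrightarrow> g \<in> c_arr C \<Longrightarrow> c_dom C f = c_dom C g \<Longrightarrow> c_cod C f = c_cod C g
      \<Longrightarrow> c_add C f g \<in> c_arr C"
  and dom_add [simp]:
    "f \<in> c_arr C \<Longrightarrow> g \<in> c_arr C \<Longrightarrow> c_dom C f = c_dom C g \<Longrightarrow> c_cod C f = c_cod C g
      \<Longrightarrow> c_dom C (c_add C f g) = c_dom C f"
  and cod_add [simp]:
    "f \<in> c_arr C \<Longrightarrow> g \<in> c_arr C \<Longrightarrow> c_dom C f = c_dom C g \<Longrightarrow> c_cod C f = c_cod C g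
      \<Longrightarrow> c_cod C (c_add C f g) = c_cod C f"
  using add_in_hom[of f "c_dom C f" "c_cod C f" g] by (auto simp: hom_def)

lemma zero_in_arr [simp]: "A \<in> c_obj C \<Longrightarrow> B \<in> c_obj C \<Longrightarrow> c_zero C A B \<in> c_arr C"
  and dom_zero [simp]: "A \<in> c_obj C \<Longrightarrow> B \<in> c_obj C \<Longrightarrow> c_dom C (c_zero C A B) = A"
  and cod_zero [simp]: "A \<in> c_obj C \<Longrightarrow> B \<in> c_obj C \<Longrightarrow> c_cod C (c_zero C A B) = B"
  using left_additive unfolding is_left_additive_def hom_def by auto

lemma add_commute: "f \<in> hom C A B \<Longrightarrow> g \<in> hom C A B \<Longrightarrow> c_add C f g = c_add C g f"
  and add_zero: "f \<in> hom C A B \<Longrightarrow> c_add C f (c_zero C A B) = f"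
  using left_additive unfolding is_left_additive_def by meson+

lemma add_zero_right [simp]:
    "f \<in> c_arr C \<Longrightarrow> c_dom C f = A \<Longrightarrow> c_cod C f = B \<Longrightarrow> c_add C f (c_zero C A B) = f"
  and add_zero_left [simp]:
    "f \<in> c_arr C \<Longrightarrow> c_dom C f = A \<Longrightarrow> c_cod C f = B \<Longrightarrow> c_add C (c_zero C A B) f = f"
  using add_zero add_commute by (auto simp: hom_def)

lemma comp_add [simp]:
  assumes "h \<in> c_arr C" "f \<in> c_arr C" "g \<in> c_arr C" "c_cod C h = c_dom C f"
    "c_dom C f = c_dom C g" "c_cod C f = c_cod C g"
  shows "c_comp C h (c_add C f g) = c_add C (c_comp C h f) (c_comp C h g)"
proof -
  have "h \<in> hom C (c_dom C h) (c_dom C f)" "f \<in> hom C (c_dom C f) (c_cod C f)"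
    "g \<in> hom C (c_dom C f) (c_cod C f)"
    using assms by (simp_all add: hom_def)
  then show ?thesis
    using left_additive unfolding is_left_additive_def by meson
qed

lemma comp_zero [simp]:
  "h \<in> c_arr C \<Longrightarrow> c_cod C h = A \<Longrightarrow> B \<in> c_obj C \<Longrightarrow> c_comp C h (c_zero C A B) = c_zero C (c_dom C h) B"
  using left_additive unfolding is_left_additive_def hom_def by auto

definition additive :: "'a \<Rightarrow> bool" where
  "additive h \<longleftrightarrow>
    (\<forall>x y. x \<in> c_arr C \<longrightarrow> y \<in> c_arr C \<longrightarrow> c_dom C x = c_dom C y \<longrightarrow>
       c_cod C x = c_dom C h \<longrightarrow> c_cod C y = c_dom C h \<longrightarrow>
       c_comp C (c_add C x y) h = c_add C (c_comp C x h) (c_comp C y h)) \<and>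
    (\<forall>Z \<in> c_obj C. c_comp C (c_zero C Z (c_dom C h)) h = c_zero C Z (c_cod C h))"

lemma additive_iff_is_additive: "h \<in> hom C X Y \<Longrightarrow> is_additive C X Y h \<longleftrightarrow> additive h"
  unfolding is_additive_def additive_def hom_def by auto

lemma additive_add:
    "additive h \<Longrightarrow> x \<in> c_arr C \<Longrightarrow> y \<in> c_arr C \<Longrightarrow> c_dom C x = c_dom C y \<Longrightarrow>
      c_cod C x = c_dom C h \<Longrightarrow> c_cod C y = c_dom C h \<Longrightarrow>
      c_comp C (c_add C x y) h = c_add C (c_comp C x h) (c_comp C y h)"
  and additive_zero:
    "additive h \<Longrightarrow> Z \<in> c_obj C \<Longrightarrow> c_dom C h = X \<Longrightarrow>
      c_comp C (c_zero C Z X) h = c_zero C Z (c_cod C h)"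
  unfolding additive_def by auto

lemma additive_pi0: "A \<in> c_obj C \<Longrightarrow> B \<in> c_obj C \<Longrightarrow> additive (c_pi0 C A B)"
  and additive_pi1: "A \<in> c_obj C \<Longrightarrow> B \<in> c_obj C \<Longrightarrow> additive (c_pi1 C A B)"
  using left_additive additive_iff_is_additive unfolding is_left_additive_def by (auto simp: hom_def)

lemma add_comp_pi0 [simp]:
    "x \<in> c_arr C \<Longrightarrow> y \<in> c_arr C \<Longrightarrow> c_dom C x = c_dom C y \<Longrightarrow>
      c_cod C x = c_prod C A B \<Longrightarrow> c_cod C y = c_prod C A B \<Longrightarrow> A \<in> c_obj C \<Longrightarrow> B \<in> c_obj C \<Longrightarrow>
      c_comp C (c_add C x y) (c_pi0 C A B) = c_add C (c_comp C x (c_pi0 C A B)) (c_comp C y (c_pi0 C A B))"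
  and add_comp_pi1 [simp]:
    "x \<in> c_arr C \<Longrightarrow> y \<in> c_arr C \<Longrightarrow> c_dom C x = c_dom C y \<Longrightarrow>
      c_cod C x = c_prod C A B \<Longrightarrow> c_cod C y = c_prod C A B \<Longrightarrow> A \<in> c_obj C \<Longrightarrow> B \<in> c_obj C \<Longrightarrow>
      c_comp C (c_add C x y) (c_pi1 C A B) = c_add C (c_comp C x (c_pi1 C A B)) (c_comp C y (c_pi1 C A B))"
  by (rule additive_add; simp add: additive_pi0 additive_pi1)+

lemma zero_comp_pi0 [simp]:
    "Z \<in> c_obj C \<Longrightarrow> A \<in> c_obj C \<Longrightarrow> B \<in> c_obj C \<Longrightarrow>
      c_comp C (c_zero C Z (c_prod C A B)) (c_pi0 C A B) = c_zero C Z A"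
  and zero_comp_pi1 [simp]:
    "Z \<in> c_obj C \<Longrightarrow> A \<in> c_obj C \<Longrightarrow> B \<in> c_obj C \<Longrightarrow>
      c_comp C (c_zero C Z (c_prod C A B)) (c_pi1 C A B) = c_zero C Z B"
  using additive_zero[OF additive_pi0, of A B Z] additive_zero[OF additive_pi1, of A B Z] by auto

lemma pair_add:
  "f \<in> c_arr C \<Longrightarrow> g \<in> c_arr C \<Longrightarrow> f' \<in> c_arr C \<Longrightarrow> g' \<in> c_arr C \<Longrightarrow>
    c_dom C f = c_dom C g \<Longrightarrow> c_dom C f' = c_dom C f \<Longrightarrow> c_dom C g' = c_dom C f \<Longrightarrow>
    c_cod C f' = c_cod C f \<Longrightarrow> c_cod C g' = c_cod C g \<Longrightarrow>
    c_add C (c_pair C f g) (c_pair C f' g') = c_pair C (c_add C f f') (c_add C g g')"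
  by (rule pair_unique[of _ "c_cod C f" "c_cod C g"]; simp)

lemma pair_zero:
  "Z \<in> c_obj C \<Longrightarrow> A \<in> c_obj C \<Longrightarrow> B \<in> c_obj C \<Longrightarrow>
    c_pair C (c_zero C Z A) (c_zero C Z B) = c_zero C Z (c_prod C A B)"
  by (rule pair_unique[of _ A B, symmetric]; simp)

lemma additive_pair:
  assumes f: "f \<in> c_arr C" "additive f" and g: "g \<in> c_arr C" "additive g"
    and dom: "c_dom C f = c_dom C g"
  shows "additive (c_pair C f g)"
  unfolding additive_def
proof (intro conjI allI impI ballI)
  fix x y
  assume "x \<in> c_arr C" "y \<in> c_arr C" "c_dom C x = c_dom C y"
    "c_cod C x = c_dom C (c_pair C f g)" "c_cod C y = c_dom C (c_pair C f g)"
  then show "c_comp C (c_add C x y) (c_pair C f g) =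
      c_add C (c_comp C x (c_pair C f g)) (c_comp C y (c_pair C f g))"
    using f g dom by (simp add: additive_add pair_add)
next
  fix Z
  assume "Z \<in> c_obj C"
  then show "c_comp C (c_zero C Z (c_dom C (c_pair C f g))) (c_pair C f g) =
      c_zero C Z (c_cod C (c_pair C f g))"
    using f g dom by (simp add: additive_zero pair_zero)
qed

lemma additive_bang: "A \<in> c_obj C \<Longrightarrow> additive (c_bang C A)"
  unfolding additive_def by (auto intro: into_term_unique)

lemma additive_inverse:
  assumes f: "f \<in> hom C X Y" "additive f" and g: "g \<in> hom C Y X"
    and inverse: "c_comp C f g = c_id C X" "c_comp C g f = c_id C Y"
  shows "additive g"
proof -
  have [simp]: "f \<in> c_arr C" "c_dom C f = X" "c_cod C f = Y" "g \<in> c_arr C" "c_dom C g = Y"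
    "c_cod C g = X" "X \<in> c_obj C" "Y \<in> c_obj C"
    using f g by (auto simp: hom_def dest: dom_in_obj)
  show ?thesis
    unfolding additive_def
  proof (intro conjI allI impI ballI)
    fix x y
    assume [simp]: "x \<in> c_arr C" "y \<in> c_arr C" "c_dom C x = c_dom C y"
      "c_cod C x = c_dom C g" "c_cod C y = c_dom C g"
    have "c_add C x y = c_add C (c_comp C (c_comp C x g) f) (c_comp C (c_comp C y g) f)"
      using inverse by simp
    also have "\<dots> = c_comp C (c_add C (c_comp C x g) (c_comp C y g)) f"
      using f by (simp add: additive_add del: comp_assoc)
    finally show "c_comp C (c_add C x y) g = c_add C (c_comp C x g) (c_comp C y g)"
      using inverse by simp
  next
    fix Z
    assume [simp]: "Z \<in> c_obj C"
    have zero_f: "c_comp C (c_zero C Z X) f = c_zero C Z Y"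
      using f by (simp add: additive_zero)
    have "c_comp C (c_zero C Z Y) g = c_comp C (c_zero C Z X) (c_comp C f g)"
      by (simp flip: zero_f)
    then show "c_comp C (c_zero C Z (c_dom C g)) g = c_zero C Z (c_cod C g)"
      using inverse by simp
  qed
qed

lemma iso_inv_is_inverse:
  assumes "is_iso C f"
  shows "iso_inv C f \<in> hom C (c_cod C f) (c_dom C f)"
    and "c_comp C f (iso_inv C f) = c_id C (c_dom C f)"
    and "c_comp C (iso_inv C f) f = c_id C (c_cod C f)"
proof -
  let ?inverse = "\<lambda>g. g \<in> hom C (c_cod C f) (c_dom C f) \<and>
    c_comp C f g = c_id C (c_dom C f) \<and> c_comp C g f = c_id C (c_cod C f)"
  from assms obtain g where "?inverse g"
    unfolding is_iso_def by blast
  then have "?inverse (iso_inv C f)"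
    unfolding iso_inv_def by (rule someI)
  then show "iso_inv C f \<in> hom C (c_cod C f) (c_dom C f)"
    and "c_comp C f (iso_inv C f) = c_id C (c_dom C f)"
    and "c_comp C (iso_inv C f) f = c_id C (c_cod C f)"
    by auto
qed

lemma additive_2nd_iff:
  "additive_2nd C X A B f \<longleftrightarrow>
    (\<forall>x a1 a2. x \<in> c_arr C \<longrightarrow> a1 \<in> c_arr C \<longrightarrow> a2 \<in> c_arr C \<longrightarrow> c_cod C x = X \<longrightarrow>
       c_cod C a1 = A \<longrightarrow> c_cod C a2 = A \<longrightarrow> c_dom C a1 = c_dom C x \<longrightarrow> c_dom C a2 = c_dom C x \<longrightarrow>
       c_comp C (c_pair C x (c_add C a1 a2)) f =
         c_add C (c_comp C (c_pair C x a1) f) (c_comp C (c_pair C x a2) f)) \<and>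
    (\<forall>x. x \<in> c_arr C \<longrightarrow> c_cod C x = X \<longrightarrow>
       c_comp C (c_pair C x (c_zero C (c_dom C x) A)) f = c_zero C (c_dom C x) B)"
  unfolding additive_2nd_def hom_def by auto

lemma additive_2nd_add:
    "additive_2nd C X A B f \<Longrightarrow> x \<in> c_arr C \<Longrightarrow> a1 \<in> c_arr C \<Longrightarrow> a2 \<in> c_arr C \<Longrightarrow>
      c_cod C x = X \<Longrightarrow> c_cod C a1 = A \<Longrightarrow> c_cod C a2 = A \<Longrightarrow>
      c_dom C a1 = c_dom C x \<Longrightarrow> c_dom C a2 = c_dom C x \<Longrightarrow>
      c_comp C (c_pair C x (c_add C a1 a2)) f =
        c_add C (c_comp C (c_pair C x a1) f) (c_comp C (c_pair C x a2) f)"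
  and additive_2nd_zero:
    "additive_2nd C X A B f \<Longrightarrow> x \<in> c_arr C \<Longrightarrow> c_cod C x = X \<Longrightarrow> W = c_dom C x \<Longrightarrow>
      c_comp C (c_pair C x (c_zero C W A)) f = c_zero C W B"
  unfolding additive_2nd_iff by blast+

lemma additive_2nd_pi1_comp:
  assumes "X \<in> c_obj C" "h \<in> hom C A B" "additive h"
  shows "additive_2nd C X A B (c_comp C (c_pi1 C X A) h)"
  using assms unfolding additive_2nd_iff hom_def by (auto simp: additive_add additive_zero)

end

section \<open>Lenses\<close>

lemma LensA_simps [simp]:
  "c_obj (LensA C) = c_obj C \<times> c_obj C" "c_arr (LensA C) = lens_arr C"
  "c_dom (LensA C) = (\<lambda>(a, b, f, fs). a)" "c_cod (LensA C) = (\<lambda>(a, b, f, fs). b)"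
  "c_id (LensA C) = lens_id C" "c_comp (LensA C) = lens_comp C"
  "c_term (LensA C) = (c_term C, c_term C)" "c_bang (LensA C) = lens_bang C"
  "c_prod (LensA C) = lens_prod C" "c_pi0 (LensA C) = lens_pi0 C" "c_pi1 (LensA C) = lens_pi1 C"
  "c_pair (LensA C) = lens_pair C" "c_add (LensA C) = lens_add C" "c_zero (LensA C) = lens_zero C"
  by (simp_all add: LensA_def)

lemma lens_in_lens_arr_iff:
  "((A, A'), (B, B'), f, fs) \<in> lens_arr C \<longleftrightarrow>
    A \<in> c_obj C \<and> A' \<in> c_obj C \<and> B \<in> c_obj C \<and> B' \<in> c_obj C \<and>
    f \<in> c_arr C \<and> c_dom C f = A \<and> c_cod C f = B \<and>
    fs \<in> c_arr C \<and> c_dom C fs = c_prod C A B' \<and> c_cod C fs = A' \<and> additive_2nd C A B' A' fs"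
  unfolding lens_arr_def hom_def by auto

lemma lens_in_hom_LensA_iff:
  "((A, A'), (B, B'), f, fs) \<in> hom (LensA C) X Y \<longleftrightarrow>
    ((A, A'), (B, B'), f, fs) \<in> lens_arr C \<and> X = (A, A') \<and> Y = (B, B')"
  by (auto simp: hom_def)

lemma lens_exhaust:
  obtains A A' B B' f fs where "l = ((A, A'), (B, B'), f, fs)"
  by (metis prod.collapse)

lemma is_iso_LensA_intro:
  assumes "((A, A'), (B, B'), f, fs) \<in> lens_arr C" "((B, B'), (A, A'), g, gs) \<in> lens_arr C"
    and "lens_comp C ((A, A'), (B, B'), f, fs) ((B, B'), (A, A'), g, gs) = lens_id C (A, A')"
    and "lens_comp C ((B, B'), (A, A'), g, gs) ((A, A'), (B, B'), f, fs) = lens_id C (B, B')"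
  shows "is_iso (LensA C) ((A, A'), (B, B'), f, fs)"
  unfolding is_iso_def using assms
  by (auto simp: lens_in_hom_LensA_iff intro!: bexI[of _ "((B, B'), (A, A'), g, gs)"])

lemma (in cartesian_left_additive) lens_of_isos_is_iso:
  assumes f: "f \<in> hom C X Y" and g: "g \<in> hom C Y X"
    and fg: "c_comp C f g = c_id C X" and gf: "c_comp C g f = c_id C Y"
    and f': "f' \<in> hom C X' Y'" "additive f'" and g': "g' \<in> hom C Y' X'"
    and f'g': "c_comp C f' g' = c_id C X'" and g'f': "c_comp C g' f' = c_id C Y'"
  shows "is_iso (LensA C) ((X, X'), (Y, Y'), f, c_comp C (c_pi1 C X Y') g')"
proof -
  have "additive g'"
    by (rule additive_inverse[OF f' g' f'g' g'f'])
  have [simp]: "X \<in> c_obj C" "Y \<in> c_obj C" "X' \<in> c_obj C" "Y' \<in> c_obj C"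
    using f f' by (auto simp: hom_def dest: dom_in_obj cod_in_obj)
  have [simp]: "f \<in> c_arr C" "c_dom C f = X" "c_cod C f = Y" "g \<in> c_arr C" "c_dom C g = Y" "c_cod C g = X"
    "f' \<in> c_arr C" "c_dom C f' = X'" "c_cod C f' = Y'" "g' \<in> c_arr C" "c_dom C g' = Y'" "c_cod C g' = X'"
    using f g f' g' by (simp_all add: hom_def)
  show ?thesis
  proof (rule is_iso_LensA_intro)
    show "((X, X'), (Y, Y'), f, c_comp C (c_pi1 C X Y') g') \<in> lens_arr C"
      using g' \<open>additive g'\<close> by (simp add: lens_in_lens_arr_iff additive_2nd_pi1_comp)
    show "((Y, Y'), (X, X'), g, c_comp C (c_pi1 C Y X') f') \<in> lens_arr C"
      using f' by (simp add: lens_in_lens_arr_iff additive_2nd_pi1_comp)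
    show "lens_comp C ((X, X'), (Y, Y'), f, c_comp C (c_pi1 C X Y') g')
        ((Y, Y'), (X, X'), g, c_comp C (c_pi1 C Y X') f') = lens_id C (X, X')"
      using fg f'g' by simp
    show "lens_comp C ((Y, Y'), (X, X'), g, c_comp C (c_pi1 C Y X') f')
        ((X, X'), (Y, Y'), f, c_comp C (c_pi1 C X Y') g') = lens_id C (Y, Y')"
      using gf g'f' by simp
  qed
qed

section \<open>Cartesian left-additive functors\<close>

locale cartesian_left_additive_functor =
  C: cartesian_left_additive C + D: cartesian_left_additive D
  for C :: "('o, 'a) clac" and D :: "('p, 'b) clac" +
  fixes Fo :: "'o \<Rightarrow> 'p" and Fa :: "'a \<Rightarrow> 'b"
  assumes clac_functor: "clac_functor C D Fo Fa"
begin

lemma F_is_functor: "is_functor C D Fo Fa"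
  and F_preserves_products: "preserves_products C D Fo Fa"
  and F_preserves_additive: "preserves_additive C D Fo Fa"
  using clac_functor unfolding clac_functor_def by auto

lemma F_obj_in_obj [simp]: "A \<in> c_obj C \<Longrightarrow> Fo A \<in> c_obj D"
  using F_is_functor unfolding is_functor_def by auto

lemma F_in_hom: "f \<in> c_arr C \<Longrightarrow> Fa f \<in> hom D (Fo (c_dom C f)) (Fo (c_cod C f))"
  using F_is_functor unfolding is_functor_def hom_def by auto

lemma F_in_arr [simp]: "f \<in> c_arr C \<Longrightarrow> Fa f \<in> c_arr D"
  and dom_F [simp]: "f \<in> c_arr C \<Longrightarrow> c_dom D (Fa f) = Fo (c_dom C f)"
  and cod_F [simp]: "f \<in> c_arr C \<Longrightarrow> c_cod D (Fa f) = Fo (c_cod C f)"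
  using F_in_hom[of f] by (auto simp: hom_def)

lemma F_id [simp]: "A \<in> c_obj C \<Longrightarrow> Fa (c_id C A) = c_id D (Fo A)"
  using F_is_functor unfolding is_functor_def by auto

lemma F_comp:
  assumes "f \<in> c_arr C" "g \<in> c_arr C" "c_cod C f = c_dom C g"
  shows "Fa (c_comp C f g) = c_comp D (Fa f) (Fa g)"
proof -
  have "f \<in> hom C (c_dom C f) (c_cod C f)" "g \<in> hom C (c_cod C f) (c_cod C g)"
    using assms by (simp_all add: hom_def)
  then show ?thesis
    using F_is_functor unfolding is_functor_def by meson
qed

lemma comp_F [simp]:
  "f \<in> c_arr C \<Longrightarrow> g \<in> c_arr C \<Longrightarrow> c_cod C f = c_dom C g \<Longrightarrow>
    c_comp D (Fa f) (Fa g) = Fa (c_comp C f g)"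
  by (simp add: F_comp)

lemma comp_F_comp [simp]:
  "f \<in> c_arr C \<Longrightarrow> g \<in> c_arr C \<Longrightarrow> c_cod C f = c_dom C g \<Longrightarrow>
    h \<in> c_arr D \<Longrightarrow> c_dom D h = Fo (c_cod C g) \<Longrightarrow>
    c_comp D (Fa f) (c_comp D (Fa g) h) = c_comp D (Fa (c_comp C f g)) h"
  by (simp add: F_comp del: comp_F)

lemma F_add [simp]:
  assumes "f \<in> c_arr C" "g \<in> c_arr C" "c_dom C f = c_dom C g" "c_cod C f = c_cod C g"
  shows "Fa (c_add C f g) = c_add D (Fa f) (Fa g)"
proof -
  have "f \<in> hom C (c_dom C f) (c_cod C f)" "g \<in> hom C (c_dom C f) (c_cod C f)"
    using assms by (simp_all add: hom_def)
  then show ?thesis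
    using F_preserves_additive unfolding preserves_additive_def by meson
qed

lemma F_zero [simp]: "A \<in> c_obj C \<Longrightarrow> B \<in> c_obj C \<Longrightarrow> Fa (c_zero C A B) = c_zero D (Fo A) (Fo B)"
  using F_preserves_additive unfolding preserves_additive_def by auto

definition prod_cmp :: "'o \<Rightarrow> 'o \<Rightarrow> 'b" where
  "prod_cmp A B = c_pair D (Fa (c_pi0 C A B)) (Fa (c_pi1 C A B))"

definition prod_cmp_inv :: "'o \<Rightarrow> 'o \<Rightarrow> 'b" where
  "prod_cmp_inv A B = iso_inv D (prod_cmp A B)"

lemma prod_cmp_in_arr [simp]: "A \<in> c_obj C \<Longrightarrow> B \<in> c_obj C \<Longrightarrow> prod_cmp A B \<in> c_arr D"
  and dom_prod_cmp [simp]: "A \<in> c_obj C \<Longrightarrow> B \<in> c_obj C \<Longrightarrow> c_dom D (prod_cmp A B) = Fo (c_prod C A B)"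
  and cod_prod_cmp [simp]:
    "A \<in> c_obj C \<Longrightarrow> B \<in> c_obj C \<Longrightarrow> c_cod D (prod_cmp A B) = c_prod D (Fo A) (Fo B)"
  unfolding prod_cmp_def by simp_all

lemma prod_cmp_pi0 [simp]:
    "A \<in> c_obj C \<Longrightarrow> B \<in> c_obj C \<Longrightarrow> c_comp D (prod_cmp A B) (c_pi0 D (Fo A) (Fo B)) = Fa (c_pi0 C A B)"
  and prod_cmp_pi1 [simp]:
    "A \<in> c_obj C \<Longrightarrow> B \<in> c_obj C \<Longrightarrow> c_comp D (prod_cmp A B) (c_pi1 D (Fo A) (Fo B)) = Fa (c_pi1 C A B)"
  unfolding prod_cmp_def by simp_all

lemma prod_cmp_inv_is_inverse:
  assumes "A \<in> c_obj C" "B \<in> c_obj C"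
  shows "prod_cmp_inv A B \<in> hom D (c_prod D (Fo A) (Fo B)) (Fo (c_prod C A B))"
    and "c_comp D (prod_cmp A B) (prod_cmp_inv A B) = c_id D (Fo (c_prod C A B))"
    and "c_comp D (prod_cmp_inv A B) (prod_cmp A B) = c_id D (c_prod D (Fo A) (Fo B))"
proof -
  have "is_iso D (prod_cmp A B)"
    using F_preserves_products assms unfolding preserves_products_def prod_cmp_def by auto
  from D.iso_inv_is_inverse[OF this] assms
  show "prod_cmp_inv A B \<in> hom D (c_prod D (Fo A) (Fo B)) (Fo (c_prod C A B))"
    and "c_comp D (prod_cmp A B) (prod_cmp_inv A B) = c_id D (Fo (c_prod C A B))"
    and "c_comp D (prod_cmp_inv A B) (prod_cmp A B) = c_id D (c_prod D (Fo A) (Fo B))"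
    by (simp_all add: prod_cmp_inv_def)
qed

lemma prod_cmp_inv_in_arr [simp]: "A \<in> c_obj C \<Longrightarrow> B \<in> c_obj C \<Longrightarrow> prod_cmp_inv A B \<in> c_arr D"
  and dom_prod_cmp_inv [simp]:
    "A \<in> c_obj C \<Longrightarrow> B \<in> c_obj C \<Longrightarrow> c_dom D (prod_cmp_inv A B) = c_prod D (Fo A) (Fo B)"
  and cod_prod_cmp_inv [simp]:
    "A \<in> c_obj C \<Longrightarrow> B \<in> c_obj C \<Longrightarrow> c_cod D (prod_cmp_inv A B) = Fo (c_prod C A B)"
  and prod_cmp_comp_inv [simp]:
    "A \<in> c_obj C \<Longrightarrow> B \<in> c_obj C \<Longrightarrow>
      c_comp D (prod_cmp A B) (prod_cmp_inv A B) = c_id D (Fo (c_prod C A B))"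
  and prod_cmp_inv_comp [simp]:
    "A \<in> c_obj C \<Longrightarrow> B \<in> c_obj C \<Longrightarrow>
      c_comp D (prod_cmp_inv A B) (prod_cmp A B) = c_id D (c_prod D (Fo A) (Fo B))"
  using prod_cmp_inv_is_inverse by (auto simp: hom_def)

lemma prod_cmp_inv_F_pi0 [simp]:
    "A \<in> c_obj C \<Longrightarrow> B \<in> c_obj C \<Longrightarrow> c_comp D (prod_cmp_inv A B) (Fa (c_pi0 C A B)) = c_pi0 D (Fo A) (Fo B)"
  and prod_cmp_inv_F_pi1 [simp]:
    "A \<in> c_obj C \<Longrightarrow> B \<in> c_obj C \<Longrightarrow> c_comp D (prod_cmp_inv A B) (Fa (c_pi1 C A B)) = c_pi1 D (Fo A) (Fo B)"
  by (simp_all flip: prod_cmp_pi0 prod_cmp_pi1 D.comp_assoc)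

lemma prod_cmp_inv_F_pi0_comp [simp]:
  "A \<in> c_obj C \<Longrightarrow> B \<in> c_obj C \<Longrightarrow> h \<in> c_arr D \<Longrightarrow> c_dom D h = Fo A \<Longrightarrow>
    c_comp D (prod_cmp_inv A B) (c_comp D (Fa (c_pi0 C A B)) h) = c_comp D (c_pi0 D (Fo A) (Fo B)) h"
  by (subst D.comp_assoc[symmetric]; simp)

lemma prod_cmp_inv_F_pi1_comp [simp]:
  "A \<in> c_obj C \<Longrightarrow> B \<in> c_obj C \<Longrightarrow> h \<in> c_arr D \<Longrightarrow> c_dom D h = Fo B \<Longrightarrow>
    c_comp D (prod_cmp_inv A B) (c_comp D (Fa (c_pi1 C A B)) h) = c_comp D (c_pi1 D (Fo A) (Fo B)) h"
  by (subst D.comp_assoc[symmetric]; simp)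

lemma prod_cmp_comp_inv_comp [simp]:
  "A \<in> c_obj C \<Longrightarrow> B \<in> c_obj C \<Longrightarrow> h \<in> c_arr D \<Longrightarrow> c_dom D h = Fo (c_prod C A B) \<Longrightarrow>
    c_comp D (prod_cmp A B) (c_comp D (prod_cmp_inv A B) h) = h"
  by (subst D.comp_assoc[symmetric]; simp)

lemma eq_comp_prod_cmp_inv:
  assumes "A \<in> c_obj C" "B \<in> c_obj C"
    and "s \<in> c_arr D" "c_cod D s = Fo (c_prod C A B)"
    and "t \<in> c_arr D" "c_dom D t = c_dom D s" "c_cod D t = c_prod D (Fo A) (Fo B)"
    and pi0: "c_comp D s (Fa (c_pi0 C A B)) = c_comp D t (c_pi0 D (Fo A) (Fo B))"
    and pi1: "c_comp D s (Fa (c_pi1 C A B)) = c_comp D t (c_pi1 D (Fo A) (Fo B))"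
  shows "s = c_comp D t (prod_cmp_inv A B)"
proof -
  have s_cmp: "c_comp D s (prod_cmp A B) = t"
    using assms D.pair_eta[of t "Fo A" "Fo B"] by (simp add: prod_cmp_def pi0 pi1)
  have "s = c_comp D s (c_comp D (prod_cmp A B) (prod_cmp_inv A B))"
    using assms by simp
  also have "\<dots> = c_comp D (c_comp D s (prod_cmp A B)) (prod_cmp_inv A B)"
    using assms by (intro D.comp_assoc[symmetric]) simp_all
  finally show ?thesis
    unfolding s_cmp .
qed

definition term_cmp_inv :: 'b where
  "term_cmp_inv = iso_inv D (c_bang D (Fo (c_term C)))"

lemma term_cmp_inv_is_inverse:
  shows "term_cmp_inv \<in> hom D (c_term D) (Fo (c_term C))"
    and "c_comp D (c_bang D (Fo (c_term C))) term_cmp_inv = c_id D (Fo (c_term C))"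
    and "c_comp D term_cmp_inv (c_bang D (Fo (c_term C))) = c_id D (c_term D)"
proof -
  have "is_iso D (c_bang D (Fo (c_term C)))"
    using F_preserves_products unfolding preserves_products_def by (elim conjE)
  from D.iso_inv_is_inverse[OF this]
  show "term_cmp_inv \<in> hom D (c_term D) (Fo (c_term C))"
    and "c_comp D (c_bang D (Fo (c_term C))) term_cmp_inv = c_id D (Fo (c_term C))"
    and "c_comp D term_cmp_inv (c_bang D (Fo (c_term C))) = c_id D (c_term D)"
    by (simp_all add: term_cmp_inv_def)
qed

lemma term_cmp_inv_in_arr [simp]: "term_cmp_inv \<in> c_arr D"
  and dom_term_cmp_inv [simp]: "c_dom D term_cmp_inv = c_term D"
  and cod_term_cmp_inv [simp]: "c_cod D term_cmp_inv = Fo (c_term C)"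
  using term_cmp_inv_is_inverse(1) by (auto simp: hom_def)

lemma into_F_term_unique:
  assumes "h \<in> c_arr D" "k \<in> c_arr D" "c_cod D h = Fo (c_term C)" "c_cod D k = Fo (c_term C)"
    and "c_dom D h = c_dom D k"
  shows "h = k"
proof -
  have factor: "x = c_comp D (c_bang D (c_dom D x)) term_cmp_inv"
    if "x \<in> c_arr D" "c_cod D x = Fo (c_term C)" for x
  proof -
    have "x = c_comp D (c_comp D x (c_bang D (Fo (c_term C)))) term_cmp_inv"
      using that term_cmp_inv_is_inverse(2) by simp
    also have "c_comp D x (c_bang D (Fo (c_term C))) = c_bang D (c_dom D x)"
      using that by (intro D.into_term_unique) simp_all
    finally show ?thesis .
  qed
  show ?thesis
    using factor[of h] factor[of k] assms by simp
qed

lemma additive_F: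
  assumes h: "h \<in> c_arr C" "C.additive h"
  shows "D.additive (Fa h)"
proof -
  define X where "X = c_dom C h"
  have [simp]: "X \<in> c_obj C" "c_dom C h = X"
    using h by (simp_all add: X_def)
  show ?thesis
    unfolding D.additive_def
  proof (intro conjI allI impI ballI)
    fix x y
    assume [simp]: "x \<in> c_arr D" "y \<in> c_arr D" "c_dom D x = c_dom D y"
      "c_cod D x = c_dom D (Fa h)" "c_cod D y = c_dom D (Fa h)"
    define u where "u = c_comp D (c_pair D x y) (prod_cmp_inv X X)"
    have [simp]: "u \<in> c_arr D" "c_dom D u = c_dom D x" "c_cod D u = Fo (c_prod C X X)"
      using h by (simp_all add: u_def)
    have ux: "c_comp D u (Fa (c_pi0 C X X)) = x" and uy: "c_comp D u (Fa (c_pi1 C X X)) = y"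
      using h by (simp_all add: u_def)
    have "c_add D x y = c_comp D u (Fa (c_add C (c_pi0 C X X) (c_pi1 C X X)))"
      by (simp add: ux uy)
    then have "c_comp D (c_add D x y) (Fa h) =
        c_comp D u (Fa (c_comp C (c_add C (c_pi0 C X X) (c_pi1 C X X)) h))"
      using h by (simp del: F_add)
    also have "c_comp C (c_add C (c_pi0 C X X) (c_pi1 C X X)) h =
        c_add C (c_comp C (c_pi0 C X X) h) (c_comp C (c_pi1 C X X) h)"
      using h by (intro C.additive_add) simp_all
    also have "c_comp D u (Fa \<dots>) = c_add D (c_comp D x (Fa h)) (c_comp D y (Fa h))"
      using h by (simp add: ux[symmetric] uy[symmetric] F_comp del: comp_F comp_F_comp)
    finally show "c_comp D (c_add D x y) (Fa h) = c_add D (c_comp D x (Fa h)) (c_comp D y (Fa h))" .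
  next
    fix Z
    assume [simp]: "Z \<in> c_obj D"
    \<comment> \<open>Zero maps into \<open>F X\<close> factor through the terminal object \<open>F 1\<close>.\<close>
    have "c_zero D Z (Fo X) = c_comp D (c_bang D Z) (c_comp D term_cmp_inv (Fa (c_zero C (c_term C) X)))"
      by simp
    then have "c_comp D (c_zero D Z (Fo X)) (Fa h) =
        c_comp D (c_bang D Z) (c_comp D term_cmp_inv (Fa (c_comp C (c_zero C (c_term C) X) h)))"
      using h by (simp del: F_zero)
    also have "c_comp C (c_zero C (c_term C) X) h = c_zero C (c_term C) (c_cod C h)"
      using h by (intro C.additive_zero) simp_all
    finally show "c_comp D (c_zero D Z (c_dom D (Fa h))) (Fa h) = c_zero D Z (c_cod D (Fa h))"
      using h by simp
  qed
qed

lemma additive_prod_cmp: "A \<in> c_obj C \<Longrightarrow> B \<in> c_obj C \<Longrightarrow> D.additive (prod_cmp A B)"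
  unfolding prod_cmp_def
  by (intro D.additive_pair additive_F C.additive_pi0 C.additive_pi1) simp_all

lemma comp_F_comp_via_prod_cmp_inv:
  assumes "A \<in> c_obj C" "B \<in> c_obj C"
    and "g \<in> c_arr C" "c_cod C g = c_prod C A B" "k \<in> c_arr C" "c_dom C k = c_prod C A B"
    and "u \<in> c_arr D" "c_cod D u = Fo (c_dom C g)"
  shows "c_comp D u (Fa (c_comp C g k)) =
    c_comp D
      (c_pair D (c_comp D u (Fa (c_comp C g (c_pi0 C A B)))) (c_comp D u (Fa (c_comp C g (c_pi1 C A B)))))
      (c_comp D (prod_cmp_inv A B) (Fa k))"
proof -
  have "c_pair D (c_comp D u (Fa (c_comp C g (c_pi0 C A B)))) (c_comp D u (Fa (c_comp C g (c_pi1 C A B))))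
      = c_comp D u (c_comp D (Fa g) (prod_cmp A B))"
    unfolding prod_cmp_def using assms by simp
  then show ?thesis
    using assms by simp
qed

lemma additive_2nd_F:
  assumes obj: "A \<in> c_obj C" "B \<in> c_obj C" "A' \<in> c_obj C"
    and fs: "fs \<in> c_arr C" "c_dom C fs = c_prod C A B" "c_cod C fs = A'" "additive_2nd C A B A' fs"
  shows "additive_2nd D (Fo A) (Fo B) (Fo A') (c_comp D (prod_cmp_inv A B) (Fa fs))"
  unfolding D.additive_2nd_iff
proof (intro conjI allI impI)
  fix x a1 a2
  assume a: "x \<in> c_arr D" "a1 \<in> c_arr D" "a2 \<in> c_arr D" "c_cod D x = Fo A"
    "c_cod D a1 = Fo B" "c_cod D a2 = Fo B" "c_dom D a1 = c_dom D x" "c_dom D a2 = c_dom D x"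
  define W where "W = c_prod C A (c_prod C B B)"
  define p where "p = c_pi0 C A (c_prod C B B)"
  define q1 where "q1 = c_comp C (c_pi1 C A (c_prod C B B)) (c_pi0 C B B)"
  define q2 where "q2 = c_comp C (c_pi1 C A (c_prod C B B)) (c_pi1 C B B)"
  have pq [simp]: "p \<in> c_arr C" "c_dom C p = W" "c_cod C p = A"
    "q1 \<in> c_arr C" "c_dom C q1 = W" "c_cod C q1 = B" "q2 \<in> c_arr C" "c_dom C q2 = W" "c_cod C q2 = B"
    using obj by (simp_all add: p_def q1_def q2_def W_def)
  \<comment> \<open>\<open>x\<close>, \<open>a1\<close> and \<open>a2\<close> are the images of the three projections of \<open>A \<times> (B \<times> B)\<close>
    under a single map \<open>u\<close>.\<close>
  define u where
    "u = c_comp D (c_pair D x (c_comp D (c_pair D a1 a2) (prod_cmp_inv B B))) (prod_cmp_inv A (c_prod C B B))"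
  have [simp]: "u \<in> c_arr D" "c_dom D u = c_dom D x" "c_cod D u = Fo W"
    using a obj by (simp_all add: u_def W_def)
  have ux: "c_comp D u (Fa p) = x" and ua1: "c_comp D u (Fa q1) = a1" and ua2: "c_comp D u (Fa q2) = a2"
    using a obj by (simp_all add: u_def p_def q1_def q2_def F_comp del: comp_F comp_F_comp)
  have G: "c_comp D u (Fa (c_comp C (c_pair C p q) fs)) =
      c_comp D (c_pair D (c_comp D u (Fa p)) (c_comp D u (Fa q))) (c_comp D (prod_cmp_inv A B) (Fa fs))"
    if "q \<in> c_arr C" "c_dom C q = W" "c_cod C q = B" for q
    using comp_F_comp_via_prod_cmp_inv[of A B "c_pair C p q" fs u] obj fs that by simp
  have "c_comp D (c_pair D x (c_add D a1 a2)) (c_comp D (prod_cmp_inv A B) (Fa fs)) =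
      c_comp D u (Fa (c_comp C (c_pair C p (c_add C q1 q2)) fs))"
    using G[of "c_add C q1 q2"] by (simp add: ux ua1 ua2)
  also have "c_comp C (c_pair C p (c_add C q1 q2)) fs =
      c_add C (c_comp C (c_pair C p q1) fs) (c_comp C (c_pair C p q2) fs)"
    by (intro C.additive_2nd_add[OF fs(4)]) simp_all
  also have "c_comp D u (Fa \<dots>) = c_add D (c_comp D u (Fa (c_comp C (c_pair C p q1) fs)))
      (c_comp D u (Fa (c_comp C (c_pair C p q2) fs)))"
    using fs obj by (simp del: comp_F comp_F_comp)
  also have "\<dots> = c_add D (c_comp D (c_pair D x a1) (c_comp D (prod_cmp_inv A B) (Fa fs)))
      (c_comp D (c_pair D x a2) (c_comp D (prod_cmp_inv A B) (Fa fs)))"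
    using G[of q1] G[of q2] by (simp only: ux ua1 ua2 pq simp_thms)
  finally show "c_comp D (c_pair D x (c_add D a1 a2)) (c_comp D (prod_cmp_inv A B) (Fa fs)) =
      c_add D (c_comp D (c_pair D x a1) (c_comp D (prod_cmp_inv A B) (Fa fs)))
        (c_comp D (c_pair D x a2) (c_comp D (prod_cmp_inv A B) (Fa fs)))" .
next
  fix x
  assume x: "x \<in> c_arr D" "c_cod D x = Fo A"
  define g where "g = c_pair C (c_id C A) (c_zero C A B)"
  have g: "g \<in> c_arr C" "c_dom C g = A" "c_cod C g = c_prod C A B"
    using obj by (simp_all add: g_def)
  have "c_comp D x (Fa (c_comp C g fs)) =
      c_comp D (c_pair D x (c_zero D (c_dom D x) (Fo B))) (c_comp D (prod_cmp_inv A B) (Fa fs))"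
    using comp_F_comp_via_prod_cmp_inv[of A B g fs x] obj fs g x by (simp add: g_def)
  moreover have "c_comp C g fs = c_zero C A A'"
    unfolding g_def using C.additive_2nd_zero[OF fs(4), of "c_id C A" A] obj by simp
  ultimately show "c_comp D (c_pair D x (c_zero D (c_dom D x) (Fo B))) (c_comp D (prod_cmp_inv A B) (Fa fs)) =
      c_zero D (c_dom D x) (Fo A')"
    using x obj by simp
qed

section \<open>The functor \<open>Lens\<^sub>A(F)\<close>\<close>

lemma LensA_arr_eq [simp]:
  "LensA_arr C D Fo Fa ((A, A'), (B, B'), f, fs) =
    ((Fo A, Fo A'), (Fo B, Fo B'), Fa f, c_comp D (prod_cmp_inv A B') (Fa fs))"
  by (simp add: prod_cmp_inv_def prod_cmp_def)

declare LensA_arr.simps [simp del]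

lemma LensA_arr_in_lens_arr:
  "((A, A'), (B, B'), f, fs) \<in> lens_arr C \<Longrightarrow> LensA_arr C D Fo Fa ((A, A'), (B, B'), f, fs) \<in> lens_arr D"
  unfolding LensA_arr_eq lens_in_lens_arr_iff by (simp add: additive_2nd_F)

lemma LensA_arr_comp:
  assumes f: "((A, A'), (B, B'), f, fs) \<in> lens_arr C" and g: "((B, B'), (E, E'), g, gs) \<in> lens_arr C"
  shows "LensA_arr C D Fo Fa (lens_comp C ((A, A'), (B, B'), f, fs) ((B, B'), (E, E'), g, gs)) =
    lens_comp D (LensA_arr C D Fo Fa ((A, A'), (B, B'), f, fs)) (LensA_arr C D Fo Fa ((B, B'), (E, E'), g, gs))"
proof -
  from f g have [simp]:
    "A \<in> c_obj C" "A' \<in> c_obj C" "B \<in> c_obj C" "B' \<in> c_obj C" "E \<in> c_obj C" "E' \<in> c_obj C"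
    "f \<in> c_arr C" "c_dom C f = A" "c_cod C f = B"
    "fs \<in> c_arr C" "c_dom C fs = c_prod C A B'" "c_cod C fs = A'"
    "g \<in> c_arr C" "c_dom C g = B" "c_cod C g = E"
    "gs \<in> c_arr C" "c_dom C gs = c_prod C B E'" "c_cod C gs = B'"
    by (auto simp: lens_in_lens_arr_iff)
  define inner where "inner = c_pair C (c_comp C (c_pi0 C A E') f) (c_pi1 C A E')"
  have [simp]: "inner \<in> c_arr C" "c_dom C inner = c_prod C A E'" "c_cod C inner = c_prod C B E'"
    by (simp_all add: inner_def)
  have inner_eq: "c_comp D (prod_cmp_inv A E') (Fa (c_comp C inner gs)) =
      c_comp D (c_pair D (c_comp D (c_pi0 D (Fo A) (Fo E')) (Fa f)) (c_pi1 D (Fo A) (Fo E')))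
        (c_comp D (prod_cmp_inv B E') (Fa gs))"
    using comp_F_comp_via_prod_cmp_inv[of B E' inner gs "prod_cmp_inv A E'"]
    by (simp add: inner_def F_comp del: comp_F comp_F_comp)
  define outer where "outer = c_pair C (c_pi0 C A E') (c_comp C inner gs)"
  have [simp]: "outer \<in> c_arr C" "c_dom C outer = c_prod C A E'" "c_cod C outer = c_prod C A B'"
    by (simp_all add: outer_def)
  have outer_eq: "c_comp D (prod_cmp_inv A E') (Fa (c_comp C outer fs)) =
      c_comp D (c_pair D (c_pi0 D (Fo A) (Fo E')) (c_comp D (prod_cmp_inv A E') (Fa (c_comp C inner gs))))
        (c_comp D (prod_cmp_inv A B') (Fa fs))"
    using comp_F_comp_via_prod_cmp_inv[of A B' outer fs "prod_cmp_inv A E'"] by (simp add: outer_def)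
  show ?thesis
    using outer_eq unfolding inner_eq
    by (simp add: outer_def inner_def F_comp del: comp_F comp_F_comp D.comp_pair D.comp_pair_comp C.comp_pair C.comp_pair_comp)
qed

lemma LensA_is_functor: "is_functor (LensA C) (LensA D) (LensA_obj Fo) (LensA_arr C D Fo Fa)"
  unfolding is_functor_def
proof (intro conjI ballI allI impI)
  fix X
  assume "X \<in> c_obj (LensA C)"
  then show "LensA_obj Fo X \<in> c_obj (LensA D)"
    and "LensA_arr C D Fo Fa (c_id (LensA C) X) = c_id (LensA D) (LensA_obj Fo X)"
    by (cases X; simp)+
next
  fix X Y l
  assume "l \<in> hom (LensA C) X Y"
  then show "LensA_arr C D Fo Fa l \<in> hom (LensA D) (LensA_obj Fo X) (LensA_obj Fo Y)"
    using LensA_arr_in_lens_arr by (cases l rule: lens_exhaust) (auto simp: lens_in_hom_LensA_iff)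
next
  fix X Y E l m
  assume "l \<in> hom (LensA C) X Y" "m \<in> hom (LensA C) Y E"
  then show "LensA_arr C D Fo Fa (c_comp (LensA C) l m) =
      c_comp (LensA D) (LensA_arr C D Fo Fa l) (LensA_arr C D Fo Fa m)"
    using LensA_arr_comp
    by (cases l rule: lens_exhaust; cases m rule: lens_exhaust)
      (auto simp: lens_in_hom_LensA_iff simp del: LensA_arr_eq)
qed

lemma LensA_preserves_additive:
  "preserves_additive (LensA C) (LensA D) (LensA_obj Fo) (LensA_arr C D Fo Fa)"
  unfolding preserves_additive_def
proof (intro conjI ballI allI impI)
  fix X Y l m
  assume "l \<in> hom (LensA C) X Y" "m \<in> hom (LensA C) X Y"
  then show "LensA_arr C D Fo Fa (c_add (LensA C) l m) =
      c_add (LensA D) (LensA_arr C D Fo Fa l) (LensA_arr C D Fo Fa m)"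
    by (cases l rule: lens_exhaust; cases m rule: lens_exhaust)
      (auto simp: lens_in_hom_LensA_iff lens_in_lens_arr_iff)
next
  fix X Y
  assume "X \<in> c_obj (LensA C)" "Y \<in> c_obj (LensA C)"
  then show "LensA_arr C D Fo Fa (c_zero (LensA C) X Y) = c_zero (LensA D) (LensA_obj Fo X) (LensA_obj Fo Y)"
    by (cases X; cases Y) simp
qed

lemma LensA_term_comparison_is_iso: "is_iso (LensA D) (lens_bang D (Fo (c_term C), Fo (c_term C)))"
proof -
  have "c_zero D (c_prod D (Fo (c_term C)) (c_term D)) (Fo (c_term C)) =
      c_comp D (c_pi1 D (Fo (c_term C)) (c_term D)) term_cmp_inv"
    by (rule into_F_term_unique) simp_all
  moreover have "is_iso (LensA D) ((Fo (c_term C), Fo (c_term C)), (c_term D, c_term D),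
      c_bang D (Fo (c_term C)), c_comp D (c_pi1 D (Fo (c_term C)) (c_term D)) term_cmp_inv)"
    using term_cmp_inv_is_inverse
    by (intro D.lens_of_isos_is_iso[where f' = "c_bang D (Fo (c_term C))"] D.additive_bang)
      (simp_all add: hom_def)
  ultimately show ?thesis
    by simp
qed

lemma LensA_prod_comparison_eq:
  assumes "A \<in> c_obj C" "A' \<in> c_obj C" "B \<in> c_obj C" "B' \<in> c_obj C"
  shows "lens_pair D (LensA_arr C D Fo Fa (lens_pi0 C (A, A') (B, B')))
      (LensA_arr C D Fo Fa (lens_pi1 C (A, A') (B, B'))) =
    ((Fo (c_prod C A B), Fo (c_prod C A' B')), (c_prod D (Fo A) (Fo B), c_prod D (Fo A') (Fo B')),
      prod_cmp A B, c_comp D (c_pi1 D (Fo (c_prod C A B)) (c_prod D (Fo A') (Fo B'))) (prod_cmp_inv A' B'))"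
proof -
  define Z where "Z = Fo (c_prod C A B)"
  define P where "P = c_prod D (Fo A') (Fo B')"
  define S0 where "S0 =
    c_comp D (c_pair D (c_pi0 D Z P) (c_comp D (c_pi1 D Z P) (c_pi0 D (Fo A') (Fo B'))))
      (c_comp D (prod_cmp_inv (c_prod C A B) A')
        (Fa (c_pair C (c_pi1 C (c_prod C A B) A') (c_zero C (c_prod C (c_prod C A B) A') B'))))"
  define S1 where "S1 =
    c_comp D (c_pair D (c_pi0 D Z P) (c_comp D (c_pi1 D Z P) (c_pi1 D (Fo A') (Fo B'))))
      (c_comp D (prod_cmp_inv (c_prod C A B) B')
        (Fa (c_pair C (c_zero C (c_prod C (c_prod C A B) B') A') (c_pi1 C (c_prod C A B) B'))))"
  have lhs: "lens_pair D (LensA_arr C D Fo Fa (lens_pi0 C (A, A') (B, B')))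
      (LensA_arr C D Fo Fa (lens_pi1 C (A, A') (B, B'))) =
    ((Z, Fo (c_prod C A' B')), (c_prod D (Fo A) (Fo B), P), prod_cmp A B, c_add D S0 S1)"
    by (simp add: Z_def P_def S0_def S1_def prod_cmp_def)
  have [simp]: "Z \<in> c_obj D" "P \<in> c_obj D"
    using assms by (simp_all add: Z_def P_def)
  have [simp]: "S0 \<in> c_arr D" "c_dom D S0 = c_prod D Z P" "c_cod D S0 = Fo (c_prod C A' B')"
    "S1 \<in> c_arr D" "c_dom D S1 = c_prod D Z P" "c_cod D S1 = Fo (c_prod C A' B')"
    using assms by (simp_all add: S0_def S1_def Z_def P_def)
  \<comment> \<open>Each projection kills one of the two summands, since \<open>F\<close> preserves zero maps.\<close>
  have "c_comp D (c_add D S0 S1) (Fa (c_pi0 C A' B')) =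
      c_add D (c_comp D S0 (Fa (c_pi0 C A' B'))) (c_comp D S1 (Fa (c_pi0 C A' B')))"
    using assms by (intro D.additive_add additive_F C.additive_pi0) simp_all
  also have "\<dots> = c_comp D (c_pi1 D Z P) (c_pi0 D (Fo A') (Fo B'))"
    using assms by (simp add: S0_def S1_def Z_def P_def)
  finally have pi0: "c_comp D (c_add D S0 S1) (Fa (c_pi0 C A' B')) =
      c_comp D (c_pi1 D Z P) (c_pi0 D (Fo A') (Fo B'))" .
  have "c_comp D (c_add D S0 S1) (Fa (c_pi1 C A' B')) =
      c_add D (c_comp D S0 (Fa (c_pi1 C A' B'))) (c_comp D S1 (Fa (c_pi1 C A' B')))"
    using assms by (intro D.additive_add additive_F C.additive_pi1) simp_all
  also have "\<dots> = c_comp D (c_pi1 D Z P) (c_pi1 D (Fo A') (Fo B'))"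
    using assms by (simp add: S0_def S1_def Z_def P_def)
  finally have pi1: "c_comp D (c_add D S0 S1) (Fa (c_pi1 C A' B')) =
      c_comp D (c_pi1 D Z P) (c_pi1 D (Fo A') (Fo B'))" .
  have "c_add D S0 S1 = c_comp D (c_pi1 D Z P) (prod_cmp_inv A' B')"
    using assms by (intro eq_comp_prod_cmp_inv pi0 pi1) (simp_all add: P_def)
  then show ?thesis
    unfolding lhs by (simp add: Z_def P_def)
qed

lemma LensA_preserves_products:
  "preserves_products (LensA C) (LensA D) (LensA_obj Fo) (LensA_arr C D Fo Fa)"
  unfolding preserves_products_def
proof (intro conjI ballI)
  show "is_iso (LensA D) (c_bang (LensA D) (LensA_obj Fo (c_term (LensA C))))"
    using LensA_term_comparison_is_iso by simp
next
  fix X Y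
  assume "X \<in> c_obj (LensA C)" "Y \<in> c_obj (LensA C)"
  then obtain A A' B B' where XY: "X = (A, A')" "Y = (B, B')"
    and obj: "A \<in> c_obj C" "A' \<in> c_obj C" "B \<in> c_obj C" "B' \<in> c_obj C"
    by auto
  have "is_iso (LensA D)
      ((Fo (c_prod C A B), Fo (c_prod C A' B')), (c_prod D (Fo A) (Fo B), c_prod D (Fo A') (Fo B')),
        prod_cmp A B, c_comp D (c_pi1 D (Fo (c_prod C A B)) (c_prod D (Fo A') (Fo B'))) (prod_cmp_inv A' B'))"
    using obj
    by (intro D.lens_of_isos_is_iso[where g = "prod_cmp_inv A B" and f' = "prod_cmp A' B'"]
        additive_prod_cmp)
      (simp_all add: hom_def)
  then show "is_iso (LensA D)
      (c_pair (LensA D) (LensA_arr C D Fo Fa (c_pi0 (LensA C) X Y)) (LensA_arr C D Fo Fa (c_pi1 (LensA C) X Y)))"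
    unfolding XY LensA_simps LensA_prod_comparison_eq[OF obj] .
qed

end

theorem propositionB11:
  fixes C :: "('o, 'a) clac" and D :: "('p, 'b) clac"
    and Fo :: "'o \<Rightarrow> 'p" and Fa :: "'a \<Rightarrow> 'b"
  assumes "clac C" and "clac D" and "clac_functor C D Fo Fa"
  shows "clac_functor (LensA C) (LensA D) (LensA_obj Fo) (LensA_arr C D Fo Fa)"
proof -
  interpret cartesian_left_additive_functor C D Fo Fa
    by unfold_locales (rule assms)+
  show ?thesis
    unfolding clac_functor_def
    using LensA_is_functor LensA_preserves_products LensA_preserves_additive by blast
qed

end
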